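(* Let $P$ be a continuous poset with $p\not\ll p$ for all $p\in P$, and let $M$ be a persistence module over $P$. Then (i) $M$ is not lower semi-continuous if $\mathrm{supp}\,M$ has a minimal element with respect to the way-below relation; (ii) $M$ is not upper semi-continuous if $\mathrm{supp}\,M$ has a maximal element with respect to the way-below relation. In particular, (iii) a nonzero finitely generated persistence module is not lower semi-continuous, and (iv) a nonzero finitely co-generated persistence module is not upper semi-continuous.
   Context: Let $P$ be a poset (as a category, $p\to q$ iff $p\le q$). A subset is directed if nonempty and any two elements have an upper bound in it. $x\ll y$ means: for every directed $D$ whose supremum exists with $y\le\sup D$, some $d\in D$ satisfies $x\le d$. $P$ is continuous if for each $p$ the set $\{x:x\ll p\}$ is directed with supremum $p$. An element $p$ is minimal (resp. maximal) in $S\subseteq P$ with respect to the way-below relation if $p\in S$ and $S\cap\{x:x\ll p\}\subseteq\{p\}$ (resp. $S\cap\{x:p\ll x\}\subseteq\{p\}$). $k$ is a commutative ring with unity; persistence modules are functors from $P$ to $k$-modules; $\mathrm{supp}\,M=\{p:M_p\ne0\}$. $k[U_x]$, $k[D_x]$ are indicator modules of $U_x=\{y\ge x\}$, $D_x=\{y\le x\}$ ($k$ on the set, $0$ elsewhere, identity maps inside). $M$ is finitely generated if there is an epimorphism onto $M$ from a finite direct sum of modules $k[U_x]$, and finitely co-generated if there is a monomorphism from $M$ into a finite direct sum of modules $k[D_x]$. $\underline M_p=\varprojlim_{x\gg p}M_x$, $\overline M_p=\varinjlim_{x\ll p}M_x$; $M$ is upper (resp. lower) semi-continuous if the canonical morphism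 $M\to\underline M$ (resp. $\overline M\to M$) is an isomorphism. *)

theory Defs
  imports "HOL-Algebra.Module"
begin

definition directed :: "'p::order set \<Rightarrow> bool" where
  "directed D \<longleftrightarrow> D \<noteq> {} \<and> (\<forall>a\<in>D. \<forall>b\<in>D. \<exists>c\<in>D. a \<le> c \<and> b \<le> c)"

definition is_sup :: "'p::order \<Rightarrow> 'p set \<Rightarrow> bool" where
  "is_sup s D \<longleftrightarrow> (\<forall>d\<in>D. d \<le> s) \<and> (\<forall>u. (\<forall>d\<in>D. d \<le> u) \<longrightarrow> s \<le> u)"

definition way_below :: "'p::order \<Rightarrow> 'p \<Rightarrow> bool" where
  "way_below x y \<longleftrightarrow>
     (\<forall>D s. directed D \<longrightarrow> is_sup s D \<longrightarrow> y \<le> s \<longrightarrow> (\<exists>d\<in>D. x \<le> d))"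

definition continuous_poset :: "'p::order itself \<Rightarrow> bool" where
  "continuous_poset _ \<longleftrightarrow>
     (\<forall>p::'p. directed {x. way_below x p} \<and> is_sup p {x. way_below x p})"

definition wb_minimal :: "'p::order set \<Rightarrow> 'p \<Rightarrow> bool" where
  "wb_minimal S p \<longleftrightarrow> p \<in> S \<and> S \<inter> {x. way_below x p} \<subseteq> {p}"

definition wb_maximal :: "'p::order set \<Rightarrow> 'p \<Rightarrow> bool" where
  "wb_maximal S p \<longleftrightarrow> p \<in> S \<and> S \<inter> {x. way_below p x} \<subseteq> {p}"

definition module_hom ::
  "('k, 'r) ring_scheme \<Rightarrow> ('k, 'a) module \<Rightarrow> ('k, 'b) module \<Rightarrow> ('a \<Rightarrow> 'b) set" where
  "module_hom R M N = {h. h \<in> carrier M \<rightarrow> carrier N \<and>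
      (\<forall>x\<in>carrier M. \<forall>y\<in>carrier M. h (x \<oplus>\<^bsub>M\<^esub> y) = h x \<oplus>\<^bsub>N\<^esub> h y) \<and>
      (\<forall>a\<in>carrier R. \<forall>x\<in>carrier M. h (a \<odot>\<^bsub>M\<^esub> x) = a \<odot>\<^bsub>N\<^esub> h x)}"

text \<open>A persistence module over the poset 'p: a functor from 'p (as a category)
  to R-modules; M p is the module at p and f p q the structure map for p \<le> q.\<close>
definition pers_module ::
  "('k, 'r) ring_scheme \<Rightarrow> ('p::order \<Rightarrow> ('k, 'm) module) \<Rightarrow> ('p \<Rightarrow> 'p \<Rightarrow> 'm \<Rightarrow> 'm) \<Rightarrow> bool" where
  "pers_module R M f \<longleftrightarrow> cring R \<and> (\<forall>p. module R (M p)) \<and>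
     (\<forall>p q. p \<le> q \<longrightarrow> f p q \<in> module_hom R (M p) (M q)) \<and>
     (\<forall>p. \<forall>m\<in>carrier (M p). f p p m = m) \<and>
     (\<forall>p q r. p \<le> q \<longrightarrow> q \<le> r \<longrightarrow> (\<forall>m\<in>carrier (M p). f q r (f p q m) = f p r m))"

definition pers_morphism ::
  "('k, 'r) ring_scheme \<Rightarrow> ('p::order \<Rightarrow> ('k, 'a) module) \<Rightarrow> ('p \<Rightarrow> 'p \<Rightarrow> 'a \<Rightarrow> 'a)
     \<Rightarrow> ('p \<Rightarrow> ('k, 'b) module) \<Rightarrow> ('p \<Rightarrow> 'p \<Rightarrow> 'b \<Rightarrow> 'b) \<Rightarrow> ('p \<Rightarrow> 'a \<Rightarrow> 'b) \<Rightarrow> bool" where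
  "pers_morphism R M f N g \<eta> \<longleftrightarrow>
     (\<forall>p. \<eta> p \<in> module_hom R (M p) (N p)) \<and>
     (\<forall>p q. p \<le> q \<longrightarrow> (\<forall>m\<in>carrier (M p). \<eta> q (f p q m) = g p q (\<eta> p m)))"

definition supp :: "('p \<Rightarrow> ('k, 'm) module) \<Rightarrow> 'p set" where
  "supp M = {p. carrier (M p) \<noteq> {\<zero>\<^bsub>M p\<^esub>}}"

text \<open>The module R^A = direct sum of copies of R indexed by {i. A i}, realised
  as functions nat => k vanishing outside A (with componentwise operations).\<close>
definition coord_module :: "('k, 'r) ring_scheme \<Rightarrow> (nat \<Rightarrow> bool) \<Rightarrow> ('k, nat \<Rightarrow> 'k) module" where
  "coord_module R A =
     \<lparr> carrier = {c. \<forall>i. (A i \<longrightarrow> c i \<in> carrier R) \<and> (\<not> A i \<longrightarrow> c i = \<zero>\<^bsub>R\<^esub>)},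
       mult = (\<lambda>a b i. a i \<otimes>\<^bsub>R\<^esub> b i),
       one = (\<lambda>i. if A i then \<one>\<^bsub>R\<^esub> else \<zero>\<^bsub>R\<^esub>),
       zero = (\<lambda>i. \<zero>\<^bsub>R\<^esub>),
       add = (\<lambda>a b i. a i \<oplus>\<^bsub>R\<^esub> b i),
       smult = (\<lambda>r c i. r \<otimes>\<^bsub>R\<^esub> c i) \<rparr>"

text \<open>The persistence module  k[U_(xs 0)] + ... + k[U_(xs (n-1))]  (identity structure maps)\<close>
definition sum_up_modules :: "('k, 'r) ring_scheme \<Rightarrow> nat \<Rightarrow> (nat \<Rightarrow> 'p::order) \<Rightarrow> 'p \<Rightarrow> ('k, nat \<Rightarrow> 'k) module" where
  "sum_up_modules R n xs p = coord_module R (\<lambda>i. i < n \<and> xs i \<le> p)"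

definition sum_up_maps :: "('k, 'r) ring_scheme \<Rightarrow> nat \<Rightarrow> (nat \<Rightarrow> 'p::order) \<Rightarrow> 'p \<Rightarrow> 'p \<Rightarrow> (nat \<Rightarrow> 'k) \<Rightarrow> (nat \<Rightarrow> 'k)" where
  "sum_up_maps R n xs p q c = c"

text \<open>The persistence module  k[D_(xs 0)] + ... + k[D_(xs (n-1))]; the structure map
  p \<le> q is the identity on the summands with q \<le> xs i and zero on the others.\<close>
definition sum_down_modules :: "('k, 'r) ring_scheme \<Rightarrow> nat \<Rightarrow> (nat \<Rightarrow> 'p::order) \<Rightarrow> 'p \<Rightarrow> ('k, nat \<Rightarrow> 'k) module" where
  "sum_down_modules R n xs p = coord_module R (\<lambda>i. i < n \<and> p \<le> xs i)"

definition sum_down_maps :: "('k, 'r) ring_scheme \<Rightarrow> nat \<Rightarrow> (nat \<Rightarrow> 'p::order) \<Rightarrow> 'p \<Rightarrow> 'p \<Rightarrow> (nat \<Rightarrow> 'k) \<Rightarrow> (nat \<Rightarrow> 'k)" where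
  "sum_down_maps R n xs p q c = (\<lambda>i. if i < n \<and> q \<le> xs i then c i else \<zero>\<^bsub>R\<^esub>)"

text \<open>Finitely generated: an epimorphism (pointwise surjective natural transformation)
  from a finite direct sum of modules k[U_x].\<close>
definition finitely_generated ::
  "('k, 'r) ring_scheme \<Rightarrow> ('p::order \<Rightarrow> ('k, 'm) module) \<Rightarrow> ('p \<Rightarrow> 'p \<Rightarrow> 'm \<Rightarrow> 'm) \<Rightarrow> bool" where
  "finitely_generated R M f \<longleftrightarrow>
     (\<exists>n xs \<eta>. pers_morphism R (sum_up_modules R n xs) (sum_up_maps R n xs) M f \<eta> \<and>
        (\<forall>p. \<eta> p ` carrier (sum_up_modules R n xs p) = carrier (M p)))"

text \<open>Finitely co-generated: a monomorphism (pointwise injective natural transformation)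
  into a finite direct sum of modules k[D_x].\<close>
definition finitely_cogenerated ::
  "('k, 'r) ring_scheme \<Rightarrow> ('p::order \<Rightarrow> ('k, 'm) module) \<Rightarrow> ('p \<Rightarrow> 'p \<Rightarrow> 'm \<Rightarrow> 'm) \<Rightarrow> bool" where
  "finitely_cogenerated R M f \<longleftrightarrow>
     (\<exists>n xs \<eta>. pers_morphism R M f (sum_down_modules R n xs) (sum_down_maps R n xs) \<eta> \<and>
        (\<forall>p. inj_on (\<eta> p) (carrier (M p))))"

text \<open>Upper semi-continuity: for every p the canonical map
  M_p \<rightarrow> lim_{x \<gg> p} M_x is an isomorphism. The limit of R-modules is realised by
  its standard construction: the compatible families (a_x)_{x \<gg> p}.
  (The canonical map is R-linear, so it is an isomorphism iff it is bijective.)\<close>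
definition upper_semicontinuous ::
  "('p::order \<Rightarrow> ('k, 'm) module) \<Rightarrow> ('p \<Rightarrow> 'p \<Rightarrow> 'm \<Rightarrow> 'm) \<Rightarrow> bool" where
  "upper_semicontinuous M f \<longleftrightarrow>
     (\<forall>p. bij_betw (\<lambda>m. \<lambda>x\<in>{x. way_below p x}. f p x m) (carrier (M p))
        {a \<in> extensional {x. way_below p x}.
           (\<forall>x. way_below p x \<longrightarrow> a x \<in> carrier (M x)) \<and>
           (\<forall>x y. way_below p x \<longrightarrow> way_below p y \<longrightarrow> x \<le> y \<longrightarrow> f x y (a x) = a y)})"

text \<open>Lower semi-continuity: for every p the canonical map
  colim_{x \<ll> p} M_x \<rightarrow> M_p is an isomorphism. The index set {x. x \<ll> p} is directed
  (P continuous), and the directed colimit of R-modules is realised by its standard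
  construction: pairs (x, a) with a in M_x, where (x,a) ~ (y,b) iff they become equal
  in some M_z with x, y \<le> z \<ll> p. Bijectivity of the induced map
  [(x,a)] \<mapsto> f x p a is expressed by the two clauses below.\<close>
definition lower_semicontinuous ::
  "('p::order \<Rightarrow> ('k, 'm) module) \<Rightarrow> ('p \<Rightarrow> 'p \<Rightarrow> 'm \<Rightarrow> 'm) \<Rightarrow> bool" where
  "lower_semicontinuous M f \<longleftrightarrow>
     (\<forall>p. (\<forall>m\<in>carrier (M p). \<exists>x a. way_below x p \<and> a \<in> carrier (M x) \<and> f x p a = m) \<and>
          (\<forall>x y a b. way_below x p \<longrightarrow> way_below y p \<longrightarrow> a \<in> carrier (M x) \<longrightarrow> b \<in> carrier (M y)
              \<longrightarrow> f x p a = f y p b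
              \<longrightarrow> (\<exists>z. way_below z p \<and> x \<le> z \<and> y \<le> z \<and> f x z a = f y z b)))"

end

theory Submission imports Defs begin

text \<open>If \<open>p\<close> is \<open>\<ll>\<close>-minimal in \<open>supp M\<close>, irreflexivity puts every \<open>x \<ll> p\<close> outside the
  support, so the colimit of the \<open>M x\<close> over \<open>x \<ll> p\<close> is zero and cannot map onto \<open>M p \<noteq> 0\<close>;
  dually, at a \<open>\<ll>\<close>-maximal \<open>p\<close> the limit over \<open>x \<gg> p\<close> is zero and \<open>M p\<close> does not embed
  into it. If \<open>M\<close> is a quotient of \<open>k[U x\<^sub>1] \<oplus> \<dots> \<oplus> k[U x\<^sub>n]\<close>, every point of the support lies
  above a generator \<open>x\<^sub>i\<close> that is itself in the support, so a \<open>\<le>\<close>-minimal such generator is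
  \<open>\<le>\<close>-minimal, hence \<open>\<ll>\<close>-minimal, in \<open>supp M\<close>; dually for cogenerators.\<close>

lemma way_below_imp_le: "way_below x y \<Longrightarrow> x \<le> (y::'p::order)"
proof -
  assume "way_below x y"
  moreover have "directed {y}" "is_sup y {y}"
    unfolding directed_def is_sup_def by auto
  ultimately show ?thesis unfolding way_below_def by blast
qed

lemma wb_minimal_if_minimal:
  assumes "p \<in> S" "\<forall>y\<in>S. y \<le> p \<longrightarrow> y = p"
  shows "wb_minimal S p"
  using assms way_below_imp_le unfolding wb_minimal_def by blast

lemma wb_maximal_if_maximal:
  assumes "p \<in> S" "\<forall>y\<in>S. p \<le> y \<longrightarrow> y = p"
  shows "wb_maximal S p"
  using assms way_below_imp_le unfolding wb_maximal_def by blast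

lemma coinitial_finite_subset_has_minimal:
  fixes X :: "'a::order set"
  assumes "finite F" "F \<subseteq> X" "X \<noteq> {}" "\<forall>q\<in>X. \<exists>s\<in>F. s \<le> q"
  shows "\<exists>p\<in>X. \<forall>y\<in>X. y \<le> p \<longrightarrow> y = p"
proof -
  have "F \<noteq> {}" using assms(3,4) by blast
  then obtain p where p: "p \<in> F" "\<forall>s\<in>F. s \<le> p \<longrightarrow> p = s"
    using finite_has_minimal[OF assms(1)] by blast
  have "y = p" if "y \<in> X" "y \<le> p" for y
  proof -
    obtain s where "s \<in> F" "s \<le> y" using assms(4) \<open>y \<in> X\<close> by blast
    then show ?thesis using p \<open>y \<le> p\<close> by (metis order.antisym order.trans)
  qed
  then show ?thesis using p(1) assms(2) by blast
qed

lemma cofinal_finite_subset_has_maximal: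
  fixes X :: "'a::order set"
  assumes "finite F" "F \<subseteq> X" "X \<noteq> {}" "\<forall>q\<in>X. \<exists>s\<in>F. q \<le> s"
  shows "\<exists>p\<in>X. \<forall>y\<in>X. p \<le> y \<longrightarrow> y = p"
proof -
  have "F \<noteq> {}" using assms(3,4) by blast
  then obtain p where p: "p \<in> F" "\<forall>s\<in>F. p \<le> s \<longrightarrow> p = s"
    using finite_has_maximal[OF assms(1)] by blast
  have "y = p" if "y \<in> X" "p \<le> y" for y
  proof -
    obtain s where "s \<in> F" "y \<le> s" using assms(4) \<open>y \<in> X\<close> by blast
    then show ?thesis using p \<open>p \<le> y\<close> by (metis order.antisym order.trans)
  qed
  then show ?thesis using p(1) assms(2) by blast
qed

lemma module_hom_closed: "h \<in> module_hom R A B \<Longrightarrow> x \<in> carrier A \<Longrightarrow> h x \<in> carrier B"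
  unfolding module_hom_def by blast

lemma module_hom_add:
  "h \<in> module_hom R A B \<Longrightarrow> x \<in> carrier A \<Longrightarrow> y \<in> carrier A \<Longrightarrow>
    h (x \<oplus>\<^bsub>A\<^esub> y) = h x \<oplus>\<^bsub>B\<^esub> h y"
  unfolding module_hom_def by blast

lemma abelian_group_idem_zero:
  "abelian_group G \<Longrightarrow> x \<in> carrier G \<Longrightarrow> x \<oplus>\<^bsub>G\<^esub> x = x \<Longrightarrow> x = \<zero>\<^bsub>G\<^esub>"
  by (metis abelian_group.l_neg abelian_group.r_neg1)

lemma module_hom_idem_zero:
  assumes h: "h \<in> module_hom R A B" and B: "abelian_group B"
    and x: "x \<in> carrier A" "x \<oplus>\<^bsub>A\<^esub> x = x"
  shows "h x = \<zero>\<^bsub>B\<^esub>"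
proof -
  have "h x \<oplus>\<^bsub>B\<^esub> h x = h x" using module_hom_add[OF h x(1) x(1)] x(2) by simp
  then show ?thesis using abelian_group_idem_zero[OF B module_hom_closed[OF h x(1)]] by blast
qed

lemma pers_module_module: "pers_module R M f \<Longrightarrow> module R (M p)"
  by (simp add: pers_module_def)

lemma pers_module_hom: "pers_module R M f \<Longrightarrow> p \<le> q \<Longrightarrow> f p q \<in> module_hom R (M p) (M q)"
  by (simp add: pers_module_def)

lemma pers_module_abelian_group_ring: "pers_module R M f \<Longrightarrow> abelian_group R"
  unfolding pers_module_def by (meson cring.axioms(1) ring.is_abelian_group)

lemma module_zero_idem: "module R N \<Longrightarrow> \<zero>\<^bsub>N\<^esub> \<in> carrier N \<and> \<zero>\<^bsub>N\<^esub> \<oplus>\<^bsub>N\<^esub> \<zero>\<^bsub>N\<^esub> = \<zero>\<^bsub>N\<^esub>"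
  by (meson abelian_group.axioms(1) abelian_monoid.r_zero abelian_monoid.zero_closed module.axioms(2))

lemma pers_module_map_zero:
  assumes "pers_module R M f" "p \<le> q"
  shows "f p q \<zero>\<^bsub>M p\<^esub> = \<zero>\<^bsub>M q\<^esub>"
proof -
  have "abelian_group (M q)" using pers_module_module[OF assms(1)] by (rule module.axioms(2))
  then show ?thesis
    using module_hom_idem_zero[OF pers_module_hom[OF assms]]
      module_zero_idem[OF pers_module_module[OF assms(1)]] by blast
qed

lemma pers_morphism_hom: "pers_morphism R M f N g \<eta> \<Longrightarrow> \<eta> p \<in> module_hom R (M p) (N p)"
  unfolding pers_morphism_def by blast

lemma pers_morphism_natural:
  "pers_morphism R M f N g \<eta> \<Longrightarrow> p \<le> q \<Longrightarrow> m \<in> carrier (M p) \<Longrightarrow> \<eta> q (f p q m) = g p q (\<eta> p m)"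
  unfolding pers_morphism_def by blast

lemma zero_if_not_in_supp: "q \<notin> supp M \<Longrightarrow> m \<in> carrier (M q) \<Longrightarrow> m = \<zero>\<^bsub>M q\<^esub>"
  unfolding supp_def by blast

lemma in_suppE:
  assumes "q \<in> supp M" "module R (M q)"
  obtains m where "m \<in> carrier (M q)" "m \<noteq> \<zero>\<^bsub>M q\<^esub>"
  using assms module_zero_idem unfolding supp_def by blast

lemma not_lower_semicontinuous_if_wb_minimal:
  fixes M :: "'p::order \<Rightarrow> ('k, 'm) module"
  assumes pm: "pers_module R M f" and irrefl: "\<forall>q::'p. \<not> way_below q q"
    and min: "wb_minimal (supp M) p"
  shows "\<not> lower_semicontinuous M f"
proof
  assume lsc: "lower_semicontinuous M f"
  have "p \<in> supp M" using min unfolding wb_minimal_def by blast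
  then obtain m where m: "m \<in> carrier (M p)" "m \<noteq> \<zero>\<^bsub>M p\<^esub>"
    using pers_module_module[OF pm] by (rule in_suppE)
  then obtain x a where xa: "way_below x p" "a \<in> carrier (M x)" "f x p a = m"
    using lsc[unfolded lower_semicontinuous_def, THEN spec[of _ p], THEN conjunct1] by blast
  have "x \<noteq> p" using irrefl xa(1) by blast
  then have "x \<notin> supp M" using min xa(1) unfolding wb_minimal_def by blast
  then have "a = \<zero>\<^bsub>M x\<^esub>" using xa(2) by (rule zero_if_not_in_supp)
  then show False
    using pers_module_map_zero[OF pm way_below_imp_le[OF xa(1)]] xa(3) m(2) by simp
qed

lemma not_upper_semicontinuous_if_wb_maximal:
  fixes M :: "'p::order \<Rightarrow> ('k, 'm) module"
  assumes pm: "pers_module R M f" and irrefl: "\<forall>q::'p. \<not> way_below q q"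
    and max: "wb_maximal (supp M) p"
  shows "\<not> upper_semicontinuous M f"
proof
  assume usc: "upper_semicontinuous M f"
  have "p \<in> supp M" using max unfolding wb_maximal_def by blast
  then obtain m where m: "m \<in> carrier (M p)" "m \<noteq> \<zero>\<^bsub>M p\<^esub>"
    using pers_module_module[OF pm] by (rule in_suppE)
  have z: "\<zero>\<^bsub>M p\<^esub> \<in> carrier (M p)" using module_zero_idem[OF pers_module_module[OF pm]] by blast
  have "f p x m = f p x \<zero>\<^bsub>M p\<^esub>" if x: "way_below p x" for x
  proof -
    have px: "p \<le> x" using x by (rule way_below_imp_le)
    have "x \<noteq> p" using irrefl x by blast
    then have "x \<notin> supp M" using max x unfolding wb_maximal_def by blast
    then have "f p x m = \<zero>\<^bsub>M x\<^esub>"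
      using module_hom_closed[OF pers_module_hom[OF pm px] m(1)] by (rule zero_if_not_in_supp)
    then show ?thesis using pers_module_map_zero[OF pm px] by simp
  qed
  then have eq: "(\<lambda>x\<in>{x. way_below p x}. f p x m) = (\<lambda>x\<in>{x. way_below p x}. f p x \<zero>\<^bsub>M p\<^esub>)"
    by (intro restrict_ext) auto
  have inj: "inj_on (\<lambda>m. \<lambda>x\<in>{x. way_below p x}. f p x m) (carrier (M p))"
    using usc[unfolded upper_semicontinuous_def, THEN spec[of _ p]] by (rule bij_betw_imp_inj_on)
  have "m = \<zero>\<^bsub>M p\<^esub>" using inj_onD[OF inj _ m(1) z] eq by simp
  then show False using m(2) by contradiction
qed

lemma coord_module_hom_vanishes:
  assumes R: "abelian_group R" and B: "abelian_group B"
    and h: "h \<in> module_hom R (coord_module R A) B" and fin: "finite {i. A i}"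
    and unit: "\<And>j a. A j \<Longrightarrow> a \<in> carrier R \<Longrightarrow> h (\<lambda>i. if i = j then a else \<zero>\<^bsub>R\<^esub>) = \<zero>\<^bsub>B\<^esub>"
    and c: "c \<in> carrier (coord_module R A)"
  shows "h c = \<zero>\<^bsub>B\<^esub>"
proof -
  interpret abelian_group R by (fact R)
  obtain n where n: "\<forall>i\<in>{i. A i}. i < n" using fin finite_nat_set_iff_bounded by blast
  have cR: "c i \<in> carrier R" for i using c by (cases "A i") (simp_all add: coord_module_def)
  have zero: "h (\<lambda>i. \<zero>\<^bsub>R\<^esub>) = \<zero>\<^bsub>B\<^esub>"
    by (rule module_hom_idem_zero[OF h B]) (simp_all add: coord_module_def)
  define trunc where "trunc k = (\<lambda>i. if i < k then c i else \<zero>\<^bsub>R\<^esub>)" for k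
  have trunc_carrier: "trunc k \<in> carrier (coord_module R A)" for k
    using c by (auto simp: trunc_def coord_module_def)
  have vanish: "h (trunc k) = \<zero>\<^bsub>B\<^esub>" for k
  proof (induction k)
    case 0
    show ?case using zero by (simp add: trunc_def)
  next
    case (Suc k)
    define e where "e = (\<lambda>i. if i = k then c k else \<zero>\<^bsub>R\<^esub>)"
    have e_carrier: "e \<in> carrier (coord_module R A)" using c by (auto simp: e_def coord_module_def)
    have "trunc (Suc k) = trunc k \<oplus>\<^bsub>coord_module R A\<^esub> e"
      by (auto simp: trunc_def e_def coord_module_def fun_eq_iff cR)
    then have "h (trunc (Suc k)) = h (trunc k) \<oplus>\<^bsub>B\<^esub> h e"
      using module_hom_add[OF h trunc_carrier e_carrier] by simp
    moreover have "h e = \<zero>\<^bsub>B\<^esub>"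
    proof (cases "A k")
      case True
      then show ?thesis using unit[OF True cR] by (simp add: e_def)
    next
      case False
      then have "e = (\<lambda>i. \<zero>\<^bsub>R\<^esub>)" using c by (auto simp: e_def coord_module_def)
      then show ?thesis using zero by simp
    qed
    ultimately show ?case
      using Suc.IH abelian_monoid.l_zero[OF abelian_group.axioms(1)[OF B]]
        abelian_monoid.zero_closed[OF abelian_group.axioms(1)[OF B]] by simp
  qed
  have "trunc n = c"
  proof
    fix i
    show "trunc n i = c i"
    proof (cases "i < n")
      case False
      then have "\<not> A i" using n by blast
      then show ?thesis using c False by (simp add: trunc_def coord_module_def)
    qed (simp add: trunc_def)
  qed
  then show ?thesis using vanish[of n] by (simp only:)
qed

lemma supp_above_generator:
  fixes M :: "'p::order \<Rightarrow> ('k, 'm) module"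
  assumes pm: "pers_module R M f"
    and mor: "pers_morphism R (sum_up_modules R n xs) (sum_up_maps R n xs) M f \<eta>"
    and surj: "\<eta> q ` carrier (sum_up_modules R n xs q) = carrier (M q)"
    and q: "q \<in> supp M"
  shows "\<exists>i<n. xs i \<le> q \<and> xs i \<in> supp M"
proof (rule ccontr)
  assume none: "\<not> (\<exists>i<n. xs i \<le> q \<and> xs i \<in> supp M)"
  have R: "abelian_group R" using pm by (rule pers_module_abelian_group_ring)
  have Mq: "abelian_group (M q)" using pers_module_module[OF pm] by (rule module.axioms(2))
  have hq: "\<eta> q \<in> module_hom R (coord_module R (\<lambda>i. i < n \<and> xs i \<le> q)) (M q)"
    using pers_morphism_hom[OF mor] unfolding sum_up_modules_def .
  have unit: "\<eta> q (\<lambda>i. if i = j then a else \<zero>\<^bsub>R\<^esub>) = \<zero>\<^bsub>M q\<^esub>"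
    if j: "j < n \<and> xs j \<le> q" and a: "a \<in> carrier R" for j a
  proof -
    let ?v = "\<lambda>i. if i = j then a else \<zero>\<^bsub>R\<^esub>"
    have v: "?v \<in> carrier (sum_up_modules R n xs (xs j))"
      using j a abelian_monoid.zero_closed[OF abelian_group.axioms(1)[OF R]] by (auto simp: sum_up_modules_def coord_module_def)
    have "xs j \<notin> supp M" using none j by blast
    then have "\<eta> (xs j) ?v = \<zero>\<^bsub>M (xs j)\<^esub>"
      using module_hom_closed[OF pers_morphism_hom[OF mor] v] by (rule zero_if_not_in_supp)
    moreover have "\<eta> q ?v = f (xs j) q (\<eta> (xs j) ?v)"
      using pers_morphism_natural[OF mor _ v, of q] j unfolding sum_up_maps_def by blast
    ultimately show ?thesis using pers_module_map_zero[OF pm] j by simp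
  qed
  obtain m where m: "m \<in> carrier (M q)" "m \<noteq> \<zero>\<^bsub>M q\<^esub>"
    using q pers_module_module[OF pm] by (rule in_suppE)
  then have "m \<in> \<eta> q ` carrier (sum_up_modules R n xs q)" using surj by simp
  then obtain c where c: "c \<in> carrier (coord_module R (\<lambda>i. i < n \<and> xs i \<le> q))" "m = \<eta> q c"
    unfolding sum_up_modules_def by blast
  have "\<eta> q c = \<zero>\<^bsub>M q\<^esub>" by (rule coord_module_hom_vanishes[OF R Mq hq _ unit c(1)]) simp_all
  then show False using c(2) m(2) by simp
qed

lemma supp_below_cogenerator:
  fixes M :: "'p::order \<Rightarrow> ('k, 'm) module"
  assumes pm: "pers_module R M f"
    and mor: "pers_morphism R M f (sum_down_modules R n xs) (sum_down_maps R n xs) \<eta>"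
    and inj: "inj_on (\<eta> q) (carrier (M q))"
    and q: "q \<in> supp M"
  shows "\<exists>i<n. q \<le> xs i \<and> xs i \<in> supp M"
proof (rule ccontr)
  assume none: "\<not> (\<exists>i<n. q \<le> xs i \<and> xs i \<in> supp M)"
  obtain m where m: "m \<in> carrier (M q)" "m \<noteq> \<zero>\<^bsub>M q\<^esub>"
    using q pers_module_module[OF pm] by (rule in_suppE)
  have z: "\<zero>\<^bsub>M q\<^esub> \<in> carrier (M q)" using module_zero_idem[OF pers_module_module[OF pm]] by blast
  have "\<eta> q m i = \<eta> q \<zero>\<^bsub>M q\<^esub> i" for i
  proof (cases "i < n \<and> q \<le> xs i")
    case True
    then have "xs i \<notin> supp M" using none by blast
    then have "f q (xs i) m = \<zero>\<^bsub>M (xs i)\<^esub>"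
      using module_hom_closed[OF pers_module_hom[OF pm] m(1)] True by (blast intro: zero_if_not_in_supp)
    then have fm: "f q (xs i) m = f q (xs i) \<zero>\<^bsub>M q\<^esub>" using pers_module_map_zero[OF pm] True by simp
    have "\<eta> (xs i) (f q (xs i) x) i = \<eta> q x i" if "x \<in> carrier (M q)" for x
      using pers_morphism_natural[OF mor _ that] True by (simp add: sum_down_maps_def)
    then show ?thesis using fm m(1) z by metis
  next
    case False
    have "\<eta> q x \<in> carrier (coord_module R (\<lambda>i. i < n \<and> q \<le> xs i))" if "x \<in> carrier (M q)" for x
      using module_hom_closed[OF pers_morphism_hom[OF mor] that] unfolding sum_down_modules_def .
    then show ?thesis using False m(1) z by (simp add: coord_module_def)
  qed
  then have "m = \<zero>\<^bsub>M q\<^esub>" using inj_onD[OF inj _ m(1) z] by blast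
  then show False using m(2) by contradiction
qed

lemma finitely_generated_imp_wb_minimal:
  fixes M :: "'p::order \<Rightarrow> ('k, 'm) module"
  assumes pm: "pers_module R M f" and fg: "finitely_generated R M f" and ne: "supp M \<noteq> {}"
  shows "\<exists>p. wb_minimal (supp M) p"
proof -
  obtain n xs \<eta> where mor: "pers_morphism R (sum_up_modules R n xs) (sum_up_maps R n xs) M f \<eta>"
    and surj: "\<forall>p. \<eta> p ` carrier (sum_up_modules R n xs p) = carrier (M p)"
    using fg unfolding finitely_generated_def by blast
  let ?F = "xs ` {i. i < n \<and> xs i \<in> supp M}"
  have "\<forall>q\<in>supp M. \<exists>s\<in>?F. s \<le> q" using supp_above_generator[OF pm mor spec[OF surj]] by blast
  then obtain p where "p \<in> supp M" "\<forall>y\<in>supp M. y \<le> p \<longrightarrow> y = p"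
    using coinitial_finite_subset_has_minimal[of ?F "supp M"] ne by auto
  then show ?thesis using wb_minimal_if_minimal by blast
qed

lemma finitely_cogenerated_imp_wb_maximal:
  fixes M :: "'p::order \<Rightarrow> ('k, 'm) module"
  assumes pm: "pers_module R M f" and fc: "finitely_cogenerated R M f" and ne: "supp M \<noteq> {}"
  shows "\<exists>p. wb_maximal (supp M) p"
proof -
  obtain n xs \<eta> where mor: "pers_morphism R M f (sum_down_modules R n xs) (sum_down_maps R n xs) \<eta>"
    and inj: "\<forall>p. inj_on (\<eta> p) (carrier (M p))"
    using fc unfolding finitely_cogenerated_def by blast
  let ?F = "xs ` {i. i < n \<and> xs i \<in> supp M}"
  have "\<forall>q\<in>supp M. \<exists>s\<in>?F. q \<le> s" using supp_below_cogenerator[OF pm mor spec[OF inj]] by blast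
  then obtain p where "p \<in> supp M" "\<forall>y\<in>supp M. p \<le> y \<longrightarrow> y = p"
    using cofinal_finite_subset_has_maximal[of ?F "supp M"] ne by auto
  then show ?thesis using wb_maximal_if_maximal by blast
qed

theorem mainTheorem16:
  fixes R :: "('k, 'r) ring_scheme"
    and M :: "'p::order \<Rightarrow> ('k, 'm) module"
    and f :: "'p \<Rightarrow> 'p \<Rightarrow> 'm \<Rightarrow> 'm"
  assumes cont: "continuous_poset TYPE('p)"
    and irrefl: "\<forall>p::'p. \<not> way_below p p"
    and pm: "pers_module R M f"
  shows "((\<exists>p. wb_minimal (supp M) p) \<longrightarrow> \<not> lower_semicontinuous M f)
       \<and> ((\<exists>p. wb_maximal (supp M) p) \<longrightarrow> \<not> upper_semicontinuous M f)
       \<and> ((supp M \<noteq> {} \<and> finitely_generated R M f) \<longrightarrow> \<not> lower_semicontinuous M f)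
       \<and> ((supp M \<noteq> {} \<and> finitely_cogenerated R M f) \<longrightarrow> \<not> upper_semicontinuous M f)"
  using not_lower_semicontinuous_if_wb_minimal[OF pm irrefl]
    not_upper_semicontinuous_if_wb_maximal[OF pm irrefl]
    finitely_generated_imp_wb_minimal[OF pm] finitely_cogenerated_imp_wb_maximal[OF pm]
  by blast

end
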